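(* Let $H\in\mathbb{R}^{n\times n}$ and $M\in\mathbb{R}^{m\times m}$ be symmetric positive semidefinite and $A\in\mathbb{R}^{m\times n}$. Let $l\neq k$ be indices and $\mathcal{B}\subseteq\{1,\dots,n\}\setminus\{l,k\}$. Assume that the linear system in the unknowns $(\Delta x_l,\Delta x_k,\Delta x_{\mathcal{B}},\Delta y,\Delta z_l)$ \[ \begin{aligned} h_{ll}\Delta x_l+h_{kl}\Delta x_k+h_{\mathcal{B}l}^T\Delta x_{\mathcal{B}}-a_l^T\Delta y-\Delta z_l&=0,\\ h_{kl}\Delta x_l+h_{kk}\Delta x_k+h_{\mathcal{B}k}^T\Delta x_{\mathcal{B}}-a_k^T\Delta y&=0,\\ h_{\mathcal{B}l}\Delta x_l+h_{\mathcal{B}k}\Delta x_k+H_{\mathcal{B}\mathcal{B}}\Delta x_{\mathcal{B}}-A_{\mathcal{B}}^T\Delta y&=0,\\ a_l\Delta x_l+a_k\Delta x_k+A_{\mathcal{B}}\Delta x_{\mathcal{B}}+M\Delta y&=0,\\ \Delta x_l+\Delta z_l&=1 \end{aligned} \] has a unique solution, and that in it $\Delta x_k\neq 0$. Then the matrices \[ K_l=\begin{pmatrix}h_{ll}&h_{\mathcal{B}l}^T&a_l^T\\ h_{\mathcal{B}l}&H_{\mathcal{B}\mathcal{B}}&A_{\mathcal{B}}^T\\ a_l&A_{\mathcal{B}}&-M\end{pmatrix}\quad\text{and}\quad K_k=\begin{pmatrix}h_{kk}&h_{\mathcal{B}k}^T&a_k^T\\ h_{\mathcal{B}k}&H_{\mathcal{B}\mathcal{B}}&A_{\mathcal{B}}^T\\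 a_k&A_{\mathcal{B}}&-M\end{pmatrix} \] are nonsingular.
   Context: $h_{ij}$ denotes the $(i,j)$ entry of $H$; $h_{\mathcal{B}j}$ the column vector $(h_{ij})_{i\in\mathcal{B}}$; $H_{\mathcal{B}\mathcal{B}}$ the principal submatrix of $H$ with rows and columns in $\mathcal{B}$; $a_j$ the $j$th column of $A$; $A_{\mathcal{B}}$ the matrix of columns of $A$ indexed by $\mathcal{B}$. *)

theory Defs
  imports "Jordan_Normal_Form.Determinant"
begin

text \<open>Indices are 0-based: \<open>{0..<n}\<close> plays the role of \<open>{1,...,n}\<close>.
  The index set B is enumerated increasingly by \<open>sorted_list_of_set B\<close>; a vector
  \<open>\<Delta>x_B\<close> is a vector of dimension \<open>card B\<close> whose p-th entry is the
  component for index \<open>sorted_list_of_set B ! p\<close>.\<close>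

definition psd_mat :: "real mat \<Rightarrow> bool" where
  "psd_mat H \<longleftrightarrow> (\<forall>v \<in> carrier_vec (dim_row H). 0 \<le> scalar_prod v (H *\<^sub>v v))"

text \<open>The matrix K_j = [[h_jj, h_Bj^T, a_j^T],[h_Bj, H_BB, A_B^T],[a_j, A_B, -M]],
  i.e. rows/columns 0..card B correspond to the indices j, b_1, ..., b_c of H,
  the remaining m rows/columns to the rows of A.\<close>
definition kkt_mat :: "real mat \<Rightarrow> real mat \<Rightarrow> real mat \<Rightarrow> nat \<Rightarrow> nat set \<Rightarrow> real mat" where
  "kkt_mat H A M j B =
    (let bs = sorted_list_of_set B; c = card B; m = dim_row A;
         idx = (\<lambda>r. if r = 0 then j else bs ! (r - 1))
     in mat (1 + c + m) (1 + c + m) (\<lambda>(r, s).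
          if r \<le> c \<and> s \<le> c then H $$ (idx r, idx s)
          else if r \<le> c then A $$ (s - 1 - c, idx r)
          else if s \<le> c then A $$ (r - 1 - c, idx s)
          else - (M $$ (r - 1 - c, s - 1 - c))))"

definition step_system ::
  "real mat \<Rightarrow> real mat \<Rightarrow> real mat \<Rightarrow> nat \<Rightarrow> nat \<Rightarrow> nat set \<Rightarrow>
   real \<Rightarrow> real \<Rightarrow> real vec \<Rightarrow> real vec \<Rightarrow> real \<Rightarrow> bool" where
  "step_system H A M l k B dxl dxk dxB dy dzl \<longleftrightarrow>
    (let bs = sorted_list_of_set B; m = dim_row A in
      dxB \<in> carrier_vec (card B) \<and> dy \<in> carrier_vec m \<and>
      H $$ (l, l) * dxl + H $$ (k, l) * dxk + (\<Sum>p<card B. H $$ (bs ! p, l) * dxB $ p)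
        - (\<Sum>i<m. A $$ (i, l) * dy $ i) - dzl = 0 \<and>
      H $$ (k, l) * dxl + H $$ (k, k) * dxk + (\<Sum>p<card B. H $$ (bs ! p, k) * dxB $ p)
        - (\<Sum>i<m. A $$ (i, k) * dy $ i) = 0 \<and>
      (\<forall>q<card B. H $$ (bs ! q, l) * dxl + H $$ (bs ! q, k) * dxk
        + (\<Sum>p<card B. H $$ (bs ! q, bs ! p) * dxB $ p)
        - (\<Sum>i<m. A $$ (i, bs ! q) * dy $ i) = 0) \<and>
      (\<forall>i<m. A $$ (i, l) * dxl + A $$ (i, k) * dxk
        + (\<Sum>p<card B. A $$ (i, bs ! p) * dxB $ p)
        + (\<Sum>j<m. M $$ (i, j) * dy $ j) = 0) \<and>
      dxl + dzl = 1)"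

end

theory Submission
  imports Defs
begin

text \<open>A kernel vector \<open>(x, y)\<close> of \<open>K\<^sub>j\<close> satisfies \<open>x\<^sup>T H x + y\<^sup>T M y = 0\<close>, so by
  semidefiniteness \<open>H x = 0\<close>, \<open>M y = 0\<close>, \<open>A x = 0\<close> and \<open>y\<close> is orthogonal to \<open>a\<^sub>j\<close> and to
  the columns of \<open>A\<^sub>B\<close>. Hence \<open>(x\<^sub>j, x\<^sub>B)\<close> and \<open>y\<close> give solutions with \<open>\<Delta>x\<^sub>k = 0\<close> of the
  step system with a modified right-hand side \<open>\<rho>\<close> in its last equation. Such a \<open>\<rho>\<close> must
  vanish, since otherwise scaling by \<open>1/\<rho>\<close> would give a solution of the original system with
  \<open>\<Delta>x\<^sub>k = 0\<close>; and then uniqueness forces the solution to be zero. For the dual part one also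
  needs \<open>y \<perp> a\<^sub>k\<close>: for \<open>K\<^sub>k\<close> this comes from the kernel equations, for \<open>K\<^sub>l\<close> from pairing
  \<open>y\<close> with the last block row of the unique solution, whose \<open>\<Delta>x\<^sub>k\<close> is nonzero.\<close>

lemma nonneg_quadratic_imp_linear_coeff_zero:
  fixes a b :: real
  assumes "\<And>t. 0 \<le> 2 * t * a + t * t * b"
  shows "a = 0"
proof -
  have b: "0 \<le> b" using assms[of 1] assms[of "-1"] by simp
  \<comment> \<open>evaluate at the minimiser \<open>t = -a/(b+1)\<close> of the regularised quadratic\<close>
  have "0 \<le> (2 * (-a/(b+1)) * a + (-a/(b+1)) * (-a/(b+1)) * b) * ((b+1) * (b+1))"
    using b by (intro mult_nonneg_nonneg assms) auto
  also have "\<dots> = - (a * a) * (b + 2)"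
    using b by (simp add: field_simps add_nonneg_eq_0_iff)
  finally have "a * a * (b + 2) \<le> 0" by simp
  with b have "a * a = 0"
    by (smt (verit) mult_pos_pos zero_le_square)
  then show ?thesis by simp
qed

lemma psd_mat_quadratic_form_zero_imp_mult_vec_zero:
  fixes H :: "real mat"
  assumes H: "H \<in> carrier_mat n n" and sym: "transpose_mat H = H" and psd: "psd_mat H"
    and x: "x \<in> carrier_vec n" and zero: "x \<bullet> (H *\<^sub>v x) = 0"
  shows "H *\<^sub>v x = 0\<^sub>v n"
proof -
  have orth: "d \<bullet> (H *\<^sub>v x) = 0" if d: "d \<in> carrier_vec n" for d
  proof (rule nonneg_quadratic_imp_linear_coeff_zero)
    fix t :: real
    have Hd: "x \<bullet> (H *\<^sub>v d) = d \<bullet> (H *\<^sub>v x)"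
      using transpose_vec_mult_scalar[OF H x d] sym comm_scalar_prod[of x n "H *\<^sub>v d"] H x d
      by simp
    have "0 \<le> (x + t \<cdot>\<^sub>v d) \<bullet> (H *\<^sub>v (x + t \<cdot>\<^sub>v d))"
      using psd H x d unfolding psd_mat_def by simp
    also have "\<dots> = x \<bullet> (H *\<^sub>v x) + t * (x \<bullet> (H *\<^sub>v d)) + t * (d \<bullet> (H *\<^sub>v x))
        + t * t * (d \<bullet> (H *\<^sub>v d))"
      using H x d by (simp add: mult_add_distrib_mat_vec[OF H] mult_mat_vec[OF H]
          add_scalar_prod_distrib[of _ n] scalar_prod_add_distrib[of _ n] algebra_simps)
    finally show "0 \<le> 2 * t * (d \<bullet> (H *\<^sub>v x)) + t * t * (d \<bullet> (H *\<^sub>v d))"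
      using zero Hd by simp
  qed
  show ?thesis
  proof (rule eq_vecI)
    fix i assume "i < dim_vec (0\<^sub>v n)"
    then show "(H *\<^sub>v x) $ i = 0\<^sub>v n $ i"
      using orth[of "unit_vec n i"] H x by simp
  qed (use H in simp)
qed

definition scatter_vec :: "nat \<Rightarrow> nat \<Rightarrow> nat list \<Rightarrow> real \<Rightarrow> (nat \<Rightarrow> real) \<Rightarrow> real vec" where
  "scatter_vec n j bs u w =
     vec n (\<lambda>t. (if t = j then u else 0) + (\<Sum>p<length bs. if bs ! p = t then w p else 0))"

lemma scatter_vec_carrier [simp]: "scatter_vec n j bs u w \<in> carrier_vec n"
  unfolding scatter_vec_def by simp

lemma scalar_prod_scatter_vec:
  assumes z: "z \<in> carrier_vec n" and j: "j < n" and bs: "set bs \<subseteq> {..<n}"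
  shows "z \<bullet> scatter_vec n j bs u w = z $ j * u + (\<Sum>p<length bs. z $ (bs ! p) * w p)"
proof -
  have "z \<bullet> scatter_vec n j bs u w
      = (\<Sum>t<n. if t = j then z $ t * u else 0)
        + (\<Sum>t<n. \<Sum>p<length bs. if bs ! p = t then z $ t * w p else 0)"
    using z j unfolding scatter_vec_def scalar_prod_def
    by (simp add: atLeast0LessThan sum.distrib distrib_left sum_distrib_left
        if_distrib[of "\<lambda>x. z $ _ * x"] cong: if_cong)
  also have "(\<Sum>t<n. \<Sum>p<length bs. if bs ! p = t then z $ t * w p else 0)
      = (\<Sum>p<length bs. z $ (bs ! p) * w p)"
    using bs by (subst sum.swap) (auto intro!: sum.cong dest: nth_mem)
  finally show ?thesis using j by simp
qed

lemma mult_vec_scatter_vec: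
  assumes G: "G \<in> carrier_mat r n" and i: "i < r" and j: "j < n" and bs: "set bs \<subseteq> {..<n}"
  shows "(G *\<^sub>v scatter_vec n j bs u w) $ i = G $$ (i, j) * u + (\<Sum>p<length bs. G $$ (i, bs ! p) * w p)"
proof -
  have "row G i $ (bs ! p) = G $$ (i, bs ! p)" if "p < length bs" for p
    using G i bs nth_mem[OF that] by auto
  then show ?thesis
    using G i j bs scalar_prod_scatter_vec[of "row G i" n j bs u w] by simp
qed

lemma kkt_mat_carrier:
  "kkt_mat H A M j B \<in> carrier_mat (1 + card B + dim_row A) (1 + card B + dim_row A)"
  unfolding kkt_mat_def Let_def by simp

lemma sum_lessThan_Suc_add_split:
  fixes f :: "nat \<Rightarrow> 'a :: comm_monoid_add"
  shows "(\<Sum>s<Suc (c + m). f s) = f 0 + (\<Sum>p<c. f (Suc p)) + (\<Sum>i<m. f (Suc (c + i)))"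
proof -
  have "(\<Sum>s<c + m. g s) = (\<Sum>p<c. g p) + (\<Sum>i<m. g (c + i))" for g :: "nat \<Rightarrow> 'a"
    by (induction m) (simp_all add: add.assoc)
  then show ?thesis unfolding sum.lessThan_Suc_shift by (simp add: add.assoc)
qed

lemma kkt_mat_mult_vec:
  fixes H A M :: "real mat"
  assumes H: "H \<in> carrier_mat n n" and A: "A \<in> carrier_mat m n" and M: "M \<in> carrier_mat m m"
    and j: "j < n" and B: "B \<subseteq> {0..<n}" and v: "v \<in> carrier_vec (1 + card B + m)"
  defines "x \<equiv> scatter_vec n j (sorted_list_of_set B) (v $ 0) (\<lambda>p. v $ Suc p)"
    and "y \<equiv> vec m (\<lambda>i. v $ Suc (card B + i))"
  shows "(kkt_mat H A M j B *\<^sub>v v) $ 0 = (H *\<^sub>v x + transpose_mat A *\<^sub>v y) $ j"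
    and "q < card B \<Longrightarrow>
      (kkt_mat H A M j B *\<^sub>v v) $ Suc q
        = (H *\<^sub>v x + transpose_mat A *\<^sub>v y) $ (sorted_list_of_set B ! q)"
    and "i < m \<Longrightarrow> (kkt_mat H A M j B *\<^sub>v v) $ Suc (card B + i) = (A *\<^sub>v x - M *\<^sub>v y) $ i"
proof -
  let ?K = "kkt_mat H A M j B" and ?c = "card B"
  define bs where "bs = sorted_list_of_set B"
  have fin: "finite B" using B finite_subset by blast
  have bs: "set bs \<subseteq> {..<n}" "length bs = ?c" using B fin unfolding bs_def by auto
  have bs_lt: "bs ! p < n" if "p < ?c" for p using bs nth_mem[of p bs] that by fastforce
  have K: "?K $$ (r, s) =
      (let idx = (\<lambda>r. if r = 0 then j else bs ! (r - 1))
       in if r \<le> ?c \<and> s \<le> ?c then H $$ (idx r, idx s)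
          else if r \<le> ?c then A $$ (s - 1 - ?c, idx r)
          else if s \<le> ?c then A $$ (r - 1 - ?c, idx s)
          else - (M $$ (r - 1 - ?c, s - 1 - ?c)))"
    if "r < 1 + ?c + m" "s < 1 + ?c + m" for r s
    using that A unfolding kkt_mat_def Let_def bs_def by simp
  have row: "(?K *\<^sub>v v) $ r = ?K $$ (r, 0) * v $ 0 + (\<Sum>p<?c. ?K $$ (r, Suc p) * v $ Suc p)
      + (\<Sum>i<m. ?K $$ (r, Suc (?c + i)) * v $ Suc (?c + i))" if "r < 1 + ?c + m" for r
    using that v A sum_lessThan_Suc_add_split[of "\<lambda>s. ?K $$ (r, s) * v $ s" ?c m]
    by (simp add: kkt_mat_def Let_def scalar_prod_def atLeast0LessThan)
  have Hx: "(H *\<^sub>v x) $ r = H $$ (r, j) * v $ 0 + (\<Sum>p<?c. H $$ (r, bs ! p) * v $ Suc p)"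
    if "r < n" for r
    using mult_vec_scatter_vec[OF H that j bs(1)] bs(2) unfolding x_def bs_def by simp
  have Ax: "(A *\<^sub>v x) $ i = A $$ (i, j) * v $ 0 + (\<Sum>p<?c. A $$ (i, bs ! p) * v $ Suc p)"
    if "i < m" for i
    using mult_vec_scatter_vec[OF A that j bs(1)] bs(2) unfolding x_def bs_def by simp
  have ATy: "(transpose_mat A *\<^sub>v y) $ r = (\<Sum>i<m. A $$ (i, r) * v $ Suc (?c + i))"
    if "r < n" for r
    using that A unfolding y_def by (simp add: scalar_prod_def atLeast0LessThan)
  have My: "(M *\<^sub>v y) $ i = (\<Sum>i'<m. M $$ (i, i') * v $ Suc (?c + i'))" if "i < m" for i
    using that M unfolding y_def by (simp add: scalar_prod_def atLeast0LessThan)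
  show "(?K *\<^sub>v v) $ 0 = (H *\<^sub>v x + transpose_mat A *\<^sub>v y) $ j"
    using H A j by (simp add: row K Hx ATy del: index_mult_mat_vec)
  show "(?K *\<^sub>v v) $ Suc q = (H *\<^sub>v x + transpose_mat A *\<^sub>v y) $ (sorted_list_of_set B ! q)"
    if "q < ?c"
    using H A that bs_lt[OF that] by (simp add: row K Hx ATy flip: bs_def del: index_mult_mat_vec)
  show "(?K *\<^sub>v v) $ Suc (?c + i) = (A *\<^sub>v x - M *\<^sub>v y) $ i" if "i < m"
    using A M that by (simp add: row K Ax My sum_negf del: index_mult_mat_vec)
qed

lemma kkt_mat_kernel:
  fixes H A M :: "real mat"
  assumes H: "H \<in> carrier_mat n n" "transpose_mat H = H" "psd_mat H"
    and M: "M \<in> carrier_mat m m" "transpose_mat M = M" "psd_mat M"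
    and A: "A \<in> carrier_mat m n" and j: "j < n" and B: "B \<subseteq> {0..<n}"
    and v: "v \<in> carrier_vec (1 + card B + m)"
    and ker: "kkt_mat H A M j B *\<^sub>v v = 0\<^sub>v (1 + card B + m)"
  defines "x \<equiv> scatter_vec n j (sorted_list_of_set B) (v $ 0) (\<lambda>p. v $ Suc p)"
    and "y \<equiv> vec m (\<lambda>i. v $ Suc (card B + i))"
  shows "H *\<^sub>v x = 0\<^sub>v n" and "M *\<^sub>v y = 0\<^sub>v m" and "A *\<^sub>v x = 0\<^sub>v m"
    and "(transpose_mat A *\<^sub>v y) $ j = 0"
    and "\<forall>q<card B. (transpose_mat A *\<^sub>v y) $ (sorted_list_of_set B ! q) = 0"
proof -
  define bs where "bs = sorted_list_of_set B"
  define z where "z = H *\<^sub>v x + transpose_mat A *\<^sub>v y"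
  have fin: "finite B" using B finite_subset by blast
  have bs: "set bs \<subseteq> {..<n}" "length bs = card B" using B fin unfolding bs_def by auto
  have x: "x \<in> carrier_vec n" and y: "y \<in> carrier_vec m" and z: "z \<in> carrier_vec n"
    using H A unfolding x_def y_def z_def by auto
  note rows = kkt_mat_mult_vec[OF H(1) A M(1) j B v, folded x_def y_def]
  have zj: "z $ j = 0" using rows(1) ker unfolding z_def by simp
  have zB: "z $ (bs ! q) = 0" if "q < card B" for q
    using rows(2)[OF that] ker that unfolding z_def bs_def by simp
  have Ax_My: "A *\<^sub>v x = M *\<^sub>v y"
  proof (rule eq_vecI)
    fix i assume "i < dim_vec (M *\<^sub>v y)"
    then have i: "i < m" using M by simp
    have "(A *\<^sub>v x - M *\<^sub>v y) $ i = 0" using rows(3)[OF i] ker i by simp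
    then show "(A *\<^sub>v x) $ i = (M *\<^sub>v y) $ i" using A M i by simp
  qed (use A M in simp)
  \<comment> \<open>\<open>x\<close> is supported on \<open>{j} \<union> B\<close>, where \<open>z\<close> vanishes\<close>
  have "x \<bullet> z = 0"
    using comm_scalar_prod[OF x z] scalar_prod_scatter_vec[OF z j bs(1)] zj zB bs(2)
    unfolding x_def bs_def by simp
  moreover have "x \<bullet> z = x \<bullet> (H *\<^sub>v x) + y \<bullet> (M *\<^sub>v y)"
    using H(1) A x y transpose_vec_mult_scalar[OF A x y] comm_scalar_prod[of x n]
    unfolding z_def Ax_My[symmetric] by (simp add: add_scalar_prod_distrib[of _ n])
  moreover have "0 \<le> x \<bullet> (H *\<^sub>v x)" "0 \<le> y \<bullet> (M *\<^sub>v y)"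
    using H M x y unfolding psd_mat_def by auto
  ultimately have "x \<bullet> (H *\<^sub>v x) = 0" "y \<bullet> (M *\<^sub>v y) = 0" by linarith+
  then show Hx: "H *\<^sub>v x = 0\<^sub>v n" and My: "M *\<^sub>v y = 0\<^sub>v m"
    using psd_mat_quadratic_form_zero_imp_mult_vec_zero H M x y by blast+
  show "A *\<^sub>v x = 0\<^sub>v m" using Ax_My My by simp
  show "(transpose_mat A *\<^sub>v y) $ j = 0"
    using zj Hx j A y unfolding z_def by simp
  show "\<forall>q<card B. (transpose_mat A *\<^sub>v y) $ (sorted_list_of_set B ! q) = 0"
    using zB Hx A y bs unfolding z_def bs_def by (auto dest: nth_mem)
qed

definition lin_form ::
  "real \<Rightarrow> real \<Rightarrow> (nat \<Rightarrow> real) \<Rightarrow> (nat \<Rightarrow> real) \<Rightarrow> nat \<Rightarrow> nat \<Rightarrow>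
   real \<Rightarrow> real \<Rightarrow> real vec \<Rightarrow> real vec \<Rightarrow> real" where
  "lin_form a b g d c m s t w y = a * s + b * t + (\<Sum>p<c. g p * w $ p) + (\<Sum>i<m. d i * y $ i)"

lemma lin_form_lincomb:
  assumes "w1 \<in> carrier_vec c" "w2 \<in> carrier_vec c" "y1 \<in> carrier_vec m" "y2 \<in> carrier_vec m"
  shows "lin_form a b g d c m (\<alpha> * s1 + \<beta> * s2) (\<alpha> * t1 + \<beta> * t2)
      (\<alpha> \<cdot>\<^sub>v w1 + \<beta> \<cdot>\<^sub>v w2) (\<alpha> \<cdot>\<^sub>v y1 + \<beta> \<cdot>\<^sub>v y2)
    = \<alpha> * lin_form a b g d c m s1 t1 w1 y1 + \<beta> * lin_form a b g d c m s2 t2 w2 y2"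
  using assms unfolding lin_form_def
  by (simp add: sum.distrib sum_distrib_left algebra_simps)

definition step_system_rhs ::
  "real mat \<Rightarrow> real mat \<Rightarrow> real mat \<Rightarrow> nat \<Rightarrow> nat \<Rightarrow> nat set \<Rightarrow>
   real \<Rightarrow> real \<Rightarrow> real vec \<Rightarrow> real vec \<Rightarrow> real \<Rightarrow> real \<Rightarrow> bool" where
  "step_system_rhs H A M l k B dxl dxk dxB dy dzl \<rho> \<longleftrightarrow>
    (let bs = sorted_list_of_set B; c = card B; m = dim_row A;
         L = (\<lambda>a b g d. lin_form a b g d c m dxl dxk dxB dy) in
      dxB \<in> carrier_vec c \<and> dy \<in> carrier_vec m \<and>
      L (H $$ (l, l)) (H $$ (k, l)) (\<lambda>p. H $$ (bs ! p, l)) (\<lambda>i. - A $$ (i, l)) = dzl \<and>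
      L (H $$ (k, l)) (H $$ (k, k)) (\<lambda>p. H $$ (bs ! p, k)) (\<lambda>i. - A $$ (i, k)) = 0 \<and>
      (\<forall>q<c. L (H $$ (bs ! q, l)) (H $$ (bs ! q, k)) (\<lambda>p. H $$ (bs ! q, bs ! p))
                (\<lambda>i. - A $$ (i, bs ! q)) = 0) \<and>
      (\<forall>i<m. L (A $$ (i, l)) (A $$ (i, k)) (\<lambda>p. A $$ (i, bs ! p)) (\<lambda>j. M $$ (i, j)) = 0) \<and>
      dxl + dzl = \<rho>)"

lemma step_system_iff_rhs_1:
  "step_system H A M l k B dxl dxk dxB dy dzl \<longleftrightarrow> step_system_rhs H A M l k B dxl dxk dxB dy dzl 1"
  unfolding step_system_def step_system_rhs_def lin_form_def Let_def
  by (simp add: sum_negf algebra_simps)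

lemma step_system_rhs_lincomb:
  assumes "step_system_rhs H A M l k B s1 t1 w1 y1 z1 \<rho>1"
    and "step_system_rhs H A M l k B s2 t2 w2 y2 z2 \<rho>2"
  shows "step_system_rhs H A M l k B (\<alpha> * s1 + \<beta> * s2) (\<alpha> * t1 + \<beta> * t2)
    (\<alpha> \<cdot>\<^sub>v w1 + \<beta> \<cdot>\<^sub>v w2) (\<alpha> \<cdot>\<^sub>v y1 + \<beta> \<cdot>\<^sub>v y2) (\<alpha> * z1 + \<beta> * z2) (\<alpha> * \<rho>1 + \<beta> * \<rho>2)"
  using assms unfolding step_system_rhs_def Let_def
  by (auto simp: lin_form_lincomb algebra_simps)

lemma vec_eq_0_by_blocks:
  assumes v: "v \<in> carrier_vec (1 + c + m)" and "v $ 0 = 0"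
    and "vec c (\<lambda>p. v $ Suc p) = 0\<^sub>v c" and "vec m (\<lambda>i. v $ Suc (c + i)) = 0\<^sub>v m"
  shows "v = 0\<^sub>v (1 + c + m)"
proof (rule eq_vecI)
  fix s assume "s < dim_vec (0\<^sub>v (1 + c + m))"
  then have s: "s < 1 + c + m" by simp
  have "v $ s = 0"
  proof (cases s)
    case (Suc p)
    show ?thesis
    proof (cases "p < c")
      case True
      then show ?thesis using assms(3) Suc by (metis index_vec index_zero_vec(1))
    next
      case False
      with s Suc have "s = Suc (c + (p - c))" "p - c < m" by auto
      then show ?thesis using assms(4) by (metis index_vec index_zero_vec(1))
    qed
  qed (use assms(2) in simp)
  then show "v $ s = 0\<^sub>v (1 + c + m) $ s" using s by simp
qed (use v in simp)

lemma add_vec_eq_self_imp_eq_0: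
  assumes "v \<in> carrier_vec n" "w \<in> carrier_vec n" "v + w = (v :: real vec)"
  shows "w = 0\<^sub>v n"
proof (rule eq_vecI)
  fix i assume "i < dim_vec (0\<^sub>v n)"
  then have i: "i < n" by simp
  have "v $ i + w $ i = (v + w) $ i" using assms(1,2) i by simp
  also have "\<dots> = v $ i" by (simp only: assms(3))
  finally show "w $ i = 0\<^sub>v n $ i" using i by simp
qed (use assms in simp)

context
  fixes H M A :: "real mat" and n m l k :: nat and B :: "nat set"
  assumes H: "H \<in> carrier_mat n n" "transpose_mat H = H" "psd_mat H"
    and M: "M \<in> carrier_mat m m" "transpose_mat M = M" "psd_mat M"
    and A: "A \<in> carrier_mat m n"
    and l: "l < n" and k: "k < n" and B: "B \<subseteq> {0..<n}"
    and unique: "\<exists>!(dxl, dxk, dxB, dy, dzl). step_system H A M l k B dxl dxk dxB dy dzl"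
    and dxk_nonzero: "\<forall>dxl dxk dxB dy dzl. step_system H A M l k B dxl dxk dxB dy dzl \<longrightarrow> dxk \<noteq> 0"
begin

lemma homogeneous_step_solution_eq_0:
  assumes "step_system_rhs H A M l k B s t w y z 0"
  shows "s = 0 \<and> t = 0 \<and> w = 0\<^sub>v (card B) \<and> y = 0\<^sub>v m \<and> z = 0"
proof -
  obtain s0 t0 w0 y0 z0 where sol: "step_system H A M l k B s0 t0 w0 y0 z0"
    and only: "\<And>s' t' w' y' z'. step_system H A M l k B s' t' w' y' z' \<Longrightarrow>
                 (s', t', w', y', z') = (s0, t0, w0, y0, z0)"
  proof -
    from unique obtain p where "case p of (s, t, w, y, z) \<Rightarrow> step_system H A M l k B s t w y z"
      and "\<And>p'. case p' of (s, t, w, y, z) \<Rightarrow> step_system H A M l k B s t w y z \<Longrightarrow> p' = p"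
      by (rule ex1E) blast
    then show thesis by (cases p) (metis (mono_tags, lifting) case_prod_conv that)
  qed
  have dims: "w0 \<in> carrier_vec (card B)" "w \<in> carrier_vec (card B)"
    "y0 \<in> carrier_vec m" "y \<in> carrier_vec m"
    using sol assms A unfolding step_system_iff_rhs_1 step_system_rhs_def Let_def by auto
  have "step_system_rhs H A M l k B (1 * s0 + 1 * s) (1 * t0 + 1 * t) (1 \<cdot>\<^sub>v w0 + 1 \<cdot>\<^sub>v w)
      (1 \<cdot>\<^sub>v y0 + 1 \<cdot>\<^sub>v y) (1 * z0 + 1 * z) (1 * 1 + 1 * 0)"
    using sol assms by (intro step_system_rhs_lincomb) (simp_all add: step_system_iff_rhs_1)
  then have "(s0 + s, t0 + t, w0 + w, y0 + y, z0 + z) = (s0, t0, w0, y0, z0)"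
    using dims by (intro only) (simp add: step_system_iff_rhs_1)
  then show ?thesis
    using dims add_vec_eq_self_imp_eq_0 by auto
qed

lemma step_rhs_eq_0_if_dxk_eq_0:
  assumes sol: "step_system_rhs H A M l k B s 0 w y z \<rho>"
  shows "\<rho> = 0"
proof (rule ccontr)
  assume "\<rho> \<noteq> 0"
  have dims: "w \<in> carrier_vec (card B)" "y \<in> carrier_vec m"
    using sol A unfolding step_system_rhs_def Let_def by auto
  have "step_system_rhs H A M l k B (1/\<rho> * s + 0 * s) (1/\<rho> * 0 + 0 * 0)
      (1/\<rho> \<cdot>\<^sub>v w + 0 \<cdot>\<^sub>v w) (1/\<rho> \<cdot>\<^sub>v y + 0 \<cdot>\<^sub>v y) (1/\<rho> * z + 0 * z) (1/\<rho> * \<rho> + 0 * \<rho>)"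
    by (rule step_system_rhs_lincomb[OF sol sol])
  moreover have "1/\<rho> \<cdot>\<^sub>v w + 0 \<cdot>\<^sub>v w = 1/\<rho> \<cdot>\<^sub>v w" "1/\<rho> \<cdot>\<^sub>v y + 0 \<cdot>\<^sub>v y = 1/\<rho> \<cdot>\<^sub>v y"
    using dims by (auto intro!: eq_vecI)
  ultimately have "step_system H A M l k B (s/\<rho>) 0 (1/\<rho> \<cdot>\<^sub>v w) (1/\<rho> \<cdot>\<^sub>v y) (z/\<rho>)"
    using \<open>\<rho> \<noteq> 0\<close> by (simp add: step_system_iff_rhs_1)
  then show False using dxk_nonzero by blast
qed

lemma set_sorted_list_of_B: "set (sorted_list_of_set B) \<subseteq> {..<n}"
  using B finite_subset[OF B] by auto

lemma nth_sorted_list_of_B_lt: "p < card B \<Longrightarrow> sorted_list_of_set B ! p < n"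
  using set_sorted_list_of_B nth_mem[of p "sorted_list_of_set B"] by fastforce

lemma sum_H_swap:
  assumes "r < n"
  shows "(\<Sum>p<card B. H $$ (sorted_list_of_set B ! p, r) * f p)
       = (\<Sum>p<card B. H $$ (r, sorted_list_of_set B ! p) * f p)"
proof (rule sum.cong)
  fix p assume "p \<in> {..<card B}"
  then have "transpose_mat H $$ (r, sorted_list_of_set B ! p) = H $$ (sorted_list_of_set B ! p, r)"
    using H(1) assms nth_sorted_list_of_B_lt by simp
  then show "H $$ (sorted_list_of_set B ! p, r) * f p = H $$ (r, sorted_list_of_set B ! p) * f p"
    using H(2) by simp
qed simp

lemma primal_kernel_l_eq_0:
  assumes Hx: "H *\<^sub>v scatter_vec n l (sorted_list_of_set B) u w = 0\<^sub>v n"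
    and Ax: "A *\<^sub>v scatter_vec n l (sorted_list_of_set B) u w = 0\<^sub>v m"
  shows "u = 0 \<and> vec (card B) w = 0\<^sub>v (card B)"
proof -
  have H_rows: "H $$ (r, l) * u + (\<Sum>p<card B. H $$ (r, sorted_list_of_set B ! p) * w p) = 0"
    if "r < n" for r
    using mult_vec_scatter_vec[OF H(1) that l set_sorted_list_of_B, of u w] that
    unfolding Hx by simp
  have A_rows: "A $$ (i, l) * u + (\<Sum>p<card B. A $$ (i, sorted_list_of_set B ! p) * w p) = 0"
    if "i < m" for i
    using mult_vec_scatter_vec[OF A that l set_sorted_list_of_B, of u w] that
    unfolding Ax by simp
  have "step_system_rhs H A M l k B u 0 (vec (card B) w) (0\<^sub>v m) 0 u"
    using H_rows[OF l] H_rows[OF k] H_rows[OF nth_sorted_list_of_B_lt] A_rows A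
    unfolding step_system_rhs_def Let_def lin_form_def by (simp add: sum_H_swap l k)
  then show ?thesis
    using step_rhs_eq_0_if_dxk_eq_0 homogeneous_step_solution_eq_0 by fastforce
qed

lemma primal_kernel_k_eq_0:
  assumes Hx: "H *\<^sub>v scatter_vec n k (sorted_list_of_set B) u w = 0\<^sub>v n"
    and Ax: "A *\<^sub>v scatter_vec n k (sorted_list_of_set B) u w = 0\<^sub>v m"
  shows "u = 0 \<and> vec (card B) w = 0\<^sub>v (card B)"
proof -
  have H_rows: "H $$ (r, k) * u + (\<Sum>p<card B. H $$ (r, sorted_list_of_set B ! p) * w p) = 0"
    if "r < n" for r
    using mult_vec_scatter_vec[OF H(1) that k set_sorted_list_of_B, of u w] that
    unfolding Hx by simp
  have A_rows: "A $$ (i, k) * u + (\<Sum>p<card B. A $$ (i, sorted_list_of_set B ! p) * w p) = 0"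
    if "i < m" for i
    using mult_vec_scatter_vec[OF A that k set_sorted_list_of_B, of u w] that
    unfolding Ax by simp
  have "H $$ (k, l) = H $$ (l, k)"
    using H l k by (metis index_transpose_mat(1) carrier_matD)
  then have "step_system_rhs H A M l k B 0 u (vec (card B) w) (0\<^sub>v m) 0 0"
    using H_rows[OF l] H_rows[OF k] H_rows[OF nth_sorted_list_of_B_lt] A_rows A
    unfolding step_system_rhs_def Let_def lin_form_def by (simp add: sum_H_swap l k)
  then show ?thesis
    using homogeneous_step_solution_eq_0 by fastforce
qed

lemma transpose_A_mult_vec_k_eq_0:
  assumes y: "y \<in> carrier_vec m" and My: "M *\<^sub>v y = 0\<^sub>v m"
    and ATy_l: "(transpose_mat A *\<^sub>v y) $ l = 0"
    and ATy_B: "\<forall>q<card B. (transpose_mat A *\<^sub>v y) $ (sorted_list_of_set B ! q) = 0"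
  shows "(transpose_mat A *\<^sub>v y) $ k = 0"
proof -
  obtain a0 b0 w0 y0 z0 where sol: "step_system H A M l k B a0 b0 w0 y0 z0"
    using unique by blast
  then have "b0 \<noteq> 0" using dxk_nonzero by blast
  have y0: "y0 \<in> carrier_vec m"
    using sol A unfolding step_system_def Let_def by simp
  define x0 where "x0 = scatter_vec n l (sorted_list_of_set B) a0 (\<lambda>p. w0 $ p) + b0 \<cdot>\<^sub>v unit_vec n k"
  have x0: "x0 \<in> carrier_vec n" unfolding x0_def by simp
  have ATy: "transpose_mat A *\<^sub>v y \<in> carrier_vec n" using A y by simp
  have "A *\<^sub>v x0 + M *\<^sub>v y0 = 0\<^sub>v m"
  proof (rule eq_vecI)
    fix i assume "i < dim_vec (0\<^sub>v m)"
    then have i: "i < m" by simp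
    have "(A *\<^sub>v x0) $ i = A $$ (i, l) * a0 + A $$ (i, k) * b0
        + (\<Sum>p<card B. A $$ (i, sorted_list_of_set B ! p) * w0 $ p)"
      using A i k mult_vec_scatter_vec[OF A i l set_sorted_list_of_B]
      unfolding x0_def by (simp add: mult_add_distrib_mat_vec[OF A] mult_mat_vec[OF A])
    moreover have "(M *\<^sub>v y0) $ i = (\<Sum>j<m. M $$ (i, j) * y0 $ j)"
      using M y0 i by (simp add: scalar_prod_def atLeast0LessThan)
    ultimately show "(A *\<^sub>v x0 + M *\<^sub>v y0) $ i = 0\<^sub>v m $ i"
      using sol A M i unfolding step_system_def Let_def by simp
  qed (use M in simp)
  then have "0 = y \<bullet> (A *\<^sub>v x0) + y \<bullet> (M *\<^sub>v y0)"
    using A M x0 y y0 by (metis mult_mat_vec_carrier scalar_prod_add_distrib scalar_prod_right_zero)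
  also have "y \<bullet> (A *\<^sub>v x0) = (transpose_mat A *\<^sub>v y) \<bullet> x0"
    using transpose_vec_mult_scalar[OF A x0 y] by simp
  also have "y \<bullet> (M *\<^sub>v y0) = 0"
    using transpose_vec_mult_scalar[OF M(1) y0 y] M(2) My y0 by simp
  also have "(transpose_mat A *\<^sub>v y) \<bullet> x0 = b0 * (transpose_mat A *\<^sub>v y) $ k"
    using scalar_prod_scatter_vec[OF ATy l set_sorted_list_of_B] ATy_l ATy_B ATy k
    unfolding x0_def by (simp add: scalar_prod_add_distrib[OF ATy])
  finally show ?thesis using \<open>b0 \<noteq> 0\<close> by simp
qed

lemma dual_kernel_eq_0:
  assumes y: "y \<in> carrier_vec m" and My: "M *\<^sub>v y = 0\<^sub>v m"
    and ATy_k: "(transpose_mat A *\<^sub>v y) $ k = 0"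
    and ATy_B: "\<forall>q<card B. (transpose_mat A *\<^sub>v y) $ (sorted_list_of_set B ! q) = 0"
  shows "y = 0\<^sub>v m"
proof -
  have ATy: "(transpose_mat A *\<^sub>v y) $ r = (\<Sum>i<m. A $$ (i, r) * y $ i)" if "r < n" for r
    using that A y by (simp add: scalar_prod_def atLeast0LessThan)
  have "(M *\<^sub>v y) $ i = (\<Sum>j<m. M $$ (i, j) * y $ j)" if "i < m" for i
    using that M y by (simp add: scalar_prod_def atLeast0LessThan)
  with My have My': "(\<Sum>j<m. M $$ (i, j) * y $ j) = 0" if "i < m" for i
    using that by (metis index_zero_vec(1))
  define \<tau> where "\<tau> = - (\<Sum>i<m. A $$ (i, l) * y $ i)"
  \<comment> \<open>\<open>\<Delta>z\<^sub>l = \<tau>\<close> absorbs the first equation; \<open>\<Delta>x\<^sub>k = 0\<close> then forces \<open>\<tau> = 0\<close>\<close>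
  have "step_system_rhs H A M l k B 0 0 (0\<^sub>v (card B)) y \<tau> \<tau>"
    using ATy_k ATy_B ATy[OF k] ATy[OF nth_sorted_list_of_B_lt] My' y A
    unfolding step_system_rhs_def Let_def lin_form_def \<tau>_def by (simp add: sum_negf)
  with step_rhs_eq_0_if_dxk_eq_0 have "step_system_rhs H A M l k B 0 0 (0\<^sub>v (card B)) y \<tau> 0"
    by (metis (full_types))
  then show ?thesis using homogeneous_step_solution_eq_0 by blast
qed

lemma kkt_mat_l_det_nonzero: "det (kkt_mat H A M l B) \<noteq> 0"
proof
  let ?N = "1 + card B + m"
  assume "det (kkt_mat H A M l B) = 0"
  then obtain v where v: "v \<in> carrier_vec ?N" and "v \<noteq> 0\<^sub>v ?N"
    and ker: "kkt_mat H A M l B *\<^sub>v v = 0\<^sub>v ?N"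
    using det_0_iff_vec_prod_zero[OF kkt_mat_carrier[of H A M l B]] A by auto
  define y where "y = vec m (\<lambda>i. v $ Suc (card B + i))"
  note kernel = kkt_mat_kernel[OF H M A l B v ker, folded y_def]
  have y: "y \<in> carrier_vec m" unfolding y_def by simp
  have "v $ 0 = 0" "vec (card B) (\<lambda>p. v $ Suc p) = 0\<^sub>v (card B)"
    using primal_kernel_l_eq_0[OF kernel(1,3)] by auto
  moreover have "y = 0\<^sub>v m"
    using dual_kernel_eq_0[OF y kernel(2) transpose_A_mult_vec_k_eq_0[OF y kernel(2,4,5)] kernel(5)] .
  ultimately have "v = 0\<^sub>v ?N" using vec_eq_0_by_blocks[OF v] unfolding y_def by blast
  with \<open>v \<noteq> 0\<^sub>v ?N\<close> show False ..
qed

lemma kkt_mat_k_det_nonzero: "det (kkt_mat H A M k B) \<noteq> 0"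
proof
  let ?N = "1 + card B + m"
  assume "det (kkt_mat H A M k B) = 0"
  then obtain v where v: "v \<in> carrier_vec ?N" and "v \<noteq> 0\<^sub>v ?N"
    and ker: "kkt_mat H A M k B *\<^sub>v v = 0\<^sub>v ?N"
    using det_0_iff_vec_prod_zero[OF kkt_mat_carrier[of H A M k B]] A by auto
  define y where "y = vec m (\<lambda>i. v $ Suc (card B + i))"
  note kernel = kkt_mat_kernel[OF H M A k B v ker, folded y_def]
  have y: "y \<in> carrier_vec m" unfolding y_def by simp
  have "v $ 0 = 0" "vec (card B) (\<lambda>p. v $ Suc p) = 0\<^sub>v (card B)"
    using primal_kernel_k_eq_0[OF kernel(1,3)] by auto
  moreover have "y = 0\<^sub>v m"
    using dual_kernel_eq_0[OF y kernel(2,4,5)] .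
  ultimately have "v = 0\<^sub>v ?N" using vec_eq_0_by_blocks[OF v] unfolding y_def by blast
  with \<open>v \<noteq> 0\<^sub>v ?N\<close> show False ..
qed

end

theorem proposition9:
  fixes H M A :: "real mat" and n m l k :: nat and B :: "nat set"
  assumes "H \<in> carrier_mat n n" and "transpose_mat H = H" and "psd_mat H"
    and "M \<in> carrier_mat m m" and "transpose_mat M = M" and "psd_mat M"
    and "A \<in> carrier_mat m n"
    and "l < n" and "k < n" and "l \<noteq> k"
    and "B \<subseteq> {0..<n} - {l, k}"
    and "\<exists>!(dxl, dxk, dxB, dy, dzl). step_system H A M l k B dxl dxk dxB dy dzl"
    and "\<forall>dxl dxk dxB dy dzl. step_system H A M l k B dxl dxk dxB dy dzl \<longrightarrow> dxk \<noteq> 0"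
  shows "det (kkt_mat H A M l B) \<noteq> 0 \<and> det (kkt_mat H A M k B) \<noteq> 0"
proof -
  have B: "B \<subseteq> {0..<n}" using assms(11) by blast
  show ?thesis
    using kkt_mat_l_det_nonzero[OF assms(1-9) B assms(12,13)]
      kkt_mat_k_det_nonzero[OF assms(1-9) B assms(12,13)] by simp
qed

end
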